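(* Let $n\in\mathbb N^\star$ be even, $\alpha\in(0,22/35]$, $M$ a probability distribution on $\mathbb N^\star$, $\mu$ a probability distribution on $[-1,1]$ with mean $\theta$, and $\tilde m\in\mathbb N^\star$. Let $\tau=\sqrt{2\log\big(8(\sqrt{\tilde m n\alpha^2}\vee1)\big)/\tilde m}$, $J=\lceil 1/\tau\rceil$, and let $I_1,\dots,I_J$ be the consecutive non-overlapping bins of width $2\tau$ partitioning $[-1,1]$ ($I_j=[-1+2(j-1)\tau,\,-1+2j\tau)\cap[-1,1]$ for $j<J$ and $I_J=[-1+2(J-1)\tau,1]$); set $I_0=I_{J+1}=\emptyset$, and let $l$ be the index with $\theta\in I_l$. For users $u=1,\dots,n/2$, let $(m_u,X^{(u)})$ be i.i.d., with $m_u\sim M$ and, given $m_u=i$, $X^{(u)}=(X^{(u)}_1,\dots,X^{(u)}_i)\sim\mu^{\otimes i}$; let $\bar X^{(u)}=\frac1{m_u}\sum_{t=1}^{m_u}X^{(u)}_t$. For $j\in[J]$ set $V^{(u)}_j=\mathbb 1\{\bar X^{(u)}\in I_{j-1}\cup I_j\cup I_{j+1}\}$ if $m_u\ge\tilde m$, and $V^{(u)}_j=0$ otherwise. Let $\tilde V^{(u)}_j$ equal $V^{(u)}_j$ with probability $e^{\alpha/6}/(1+e^{\alpha/6})$ and $1-V^{(u)}_j$ otherwise, independently over $u,j$ and of the data. Let $\hat j$ be any maximizer over $j\in[J]$ of $\sum_{u=1}^{n/2}\tilde V^{(u)}_j$, and let $\mathcal A=\{|\hat j-l|\le2\}$. Then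 $$\mathbb P(\overline{\mathcal A})\le\frac1\tau\exp\!\Big(-n\alpha^2\,\mathbb P_{m\sim M}(m\ge\tilde m)^2/579\Big).$$
   Context: This is the localisation phase of the paper's distribution-aware mean estimation algorithm; all objects are defined in the claim. $a\vee b=\max(a,b)$; $\overline{\mathcal A}$ is the complement of $\mathcal A$. *)

theory Defs
  imports "HOL-Probability.Probability"
begin

text \<open>Users are indexed by u in {1..n div 2}; the
  sample space carries (i) the sample sizes m_u, (ii) an i.i.d. array of
  samples X(u,t) from mu (only t in {1..m_u} is used), (iii) the
  randomised-response coins B(u,j) for j in {1..J}.\<close>

definition loc_tau :: "nat \<Rightarrow> nat \<Rightarrow> real \<Rightarrow> real" where
  "loc_tau mt n \<alpha> =
     sqrt (2 * ln (8 * max (sqrt (real mt * real n * \<alpha>\<^sup>2)) 1) / real mt)"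

definition loc_J :: "real \<Rightarrow> nat" where
  "loc_J \<tau> = nat \<lceil>1 / \<tau>\<rceil>"

definition bin :: "real \<Rightarrow> nat \<Rightarrow> real set" where
  "bin \<tau> j =
     (if 1 \<le> j \<and> j < loc_J \<tau> then
        {x. -1 + 2 * (real j - 1) * \<tau> \<le> x \<and> x < -1 + 2 * real j * \<tau>} \<inter> {-1..1}
      else if j = loc_J \<tau> then {-1 + 2 * (real j - 1) * \<tau> .. 1}
      else {})"

definition rr_prob :: "real \<Rightarrow> real" where
  "rr_prob \<alpha> = exp (\<alpha> / 6) / (1 + exp (\<alpha> / 6))"

type_synonym loc_omega = "(nat \<Rightarrow> nat) \<times> ((nat \<times> nat) \<Rightarrow> real) \<times> ((nat \<times> nat) \<Rightarrow> bool)"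

definition loc_space ::
  "nat pmf \<Rightarrow> real measure \<Rightarrow> nat \<Rightarrow> nat \<Rightarrow> real \<Rightarrow> loc_omega measure" where
  "loc_space M \<mu> n J p =
     PiM {1..n div 2} (\<lambda>_. measure_pmf M)
     \<Otimes>\<^sub>M (PiM ({1..n div 2} \<times> UNIV) (\<lambda>_. \<mu>)
     \<Otimes>\<^sub>M PiM ({1..n div 2} \<times> {1..J}) (\<lambda>_. measure_pmf (bernoulli_pmf p)))"

definition m_of :: "loc_omega \<Rightarrow> nat \<Rightarrow> nat" where
  "m_of \<omega> u = fst \<omega> u"

definition X_of :: "loc_omega \<Rightarrow> nat \<Rightarrow> nat \<Rightarrow> real" where
  "X_of \<omega> u t = fst (snd \<omega>) (u, t)"

definition B_of :: "loc_omega \<Rightarrow> nat \<Rightarrow> nat \<Rightarrow> bool" where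
  "B_of \<omega> u j = snd (snd \<omega>) (u, j)"

definition Xbar :: "loc_omega \<Rightarrow> nat \<Rightarrow> real" where
  "Xbar \<omega> u = (\<Sum>t = 1..m_of \<omega> u. X_of \<omega> u t) / real (m_of \<omega> u)"

definition V :: "real \<Rightarrow> nat \<Rightarrow> loc_omega \<Rightarrow> nat \<Rightarrow> nat \<Rightarrow> real" where
  "V \<tau> mt \<omega> u j =
     (if m_of \<omega> u \<ge> mt
      then indicator (bin \<tau> (j - 1) \<union> bin \<tau> j \<union> bin \<tau> (j + 1)) (Xbar \<omega> u)
      else 0)"

definition Vt :: "real \<Rightarrow> nat \<Rightarrow> loc_omega \<Rightarrow> nat \<Rightarrow> nat \<Rightarrow> real" where
  "Vt \<tau> mt \<omega> u j = (if B_of \<omega> u j then V \<tau> mt \<omega> u j else 1 - V \<tau> mt \<omega> u j)"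

definition score :: "real \<Rightarrow> nat \<Rightarrow> nat \<Rightarrow> loc_omega \<Rightarrow> nat \<Rightarrow> real" where
  "score \<tau> mt n \<omega> j = (\<Sum>u = 1..n div 2. Vt \<tau> mt \<omega> u j)"

end

theory Submission
  imports Defs
begin

(*
  Fix a bin j at distance more than 2 from the bin l of \<theta>. The score difference of j and l is a
  sum over the n/2 users of independent terms in [-1, 1]. A user with m_u \<ge> mt has, by Hoeffding,
  empirical mean within 2\<tau> of \<theta> except with probability 2 exp (-2 mt \<tau>^2) \<le> 1/2048, and then
  votes for l but not for j; randomised response multiplies the expected vote gap by
  2 rr_prob \<alpha> - 1 \<ge> \<alpha>/12.02. Hence every term has mean at most -\<delta> with
  \<delta> \<ge> \<alpha> P(m \<ge> mt)/12.03, Hoeffding bounds the probability that j scores at least as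
  much as l by exp (-n \<delta>^2/4), and a union bound over the at most 1/\<tau> far bins concludes.
*)

section \<open>Independence and concentration in product spaces\<close>

lemma indep_vars_PiM_components:
  assumes M: "\<And>i. i \<in> K \<Longrightarrow> prob_space (M i)" and f: "inj_on f I" "f \<in> I \<rightarrow> K"
  shows "prob_space.indep_vars (PiM K M) (\<lambda>i. M (f i)) (\<lambda>i \<omega>. \<omega> (f i)) I"
proof -
  interpret prob_space "PiM K M" using M by (rule prob_space_PiM)
  show ?thesis
  proof (cases "I = {}")
    case True
    then show ?thesis by (simp add: indep_vars_def2 indep_sets_def)
  next
    case False
    have "distr (PiM K M) (\<Pi>\<^sub>M i\<in>I. M (f i)) (\<lambda>\<omega>. \<lambda>i\<in>I. \<omega> (f i)) = (\<Pi>\<^sub>M i\<in>I. M (f i))"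
      by (rule distr_PiM_reindex[OF M f])
    also have "\<dots> = (\<Pi>\<^sub>M i\<in>I. distr (PiM K M) (M (f i)) (\<lambda>\<omega>. \<omega> (f i)))"
      using f by (intro PiM_cong refl distr_PiM_component[symmetric] M) auto
    moreover have "(\<lambda>\<omega>. \<omega> (f i)) \<in> measurable (PiM K M) (M (f i))" if "i \<in> I" for i
      using f that by (intro measurable_component_singleton) auto
    ultimately show ?thesis
      using False by (subst indep_vars_iff_distr_eq_PiM') auto
  qed
qed

lemma integral_PiM_component:
  fixes h :: "'b \<Rightarrow> real"
  assumes N: "\<And>i. i \<in> I \<Longrightarrow> prob_space (N i)" and k: "k \<in> I" and h: "h \<in> borel_measurable (N k)"
  shows "(\<integral>\<omega>. h (\<omega> k) \<partial>PiM I N) = (\<integral>x. h x \<partial>N k)"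
proof -
  have "(\<integral>\<omega>. h (\<omega> k) \<partial>PiM I N) = (\<integral>x. h x \<partial>distr (PiM I N) (N k) (\<lambda>\<omega>. \<omega> k))"
    by (rule integral_distr[OF measurable_component_singleton[OF k, of N] h, symmetric])
  also have "\<dots> = (\<integral>x. h x \<partial>N k)" by (subst distr_PiM_component[OF N k]) simp_all
  finally show ?thesis .
qed

lemma measure_pair_measure_Times:
  assumes "prob_space M1" "prob_space M2" "A \<in> sets M1" "B \<in> sets M2"
  shows "measure (M1 \<Otimes>\<^sub>M M2) (A \<times> B) = measure M1 A * measure M2 B"
proof -
  interpret M2: prob_space M2 by fact
  show ?thesis using assms
    by (simp add: measure_def M2.emeasure_pair_measure_Times enn2real_mult)
qed

lemma prob_pair_measure_INT_Times:
  assumes P1: "prob_space M1" and P2: "prob_space M2" and I: "finite I" "I \<noteq> {}"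
    and X: "prob_space.indep_vars M1 N1 X I" and Y: "prob_space.indep_vars M2 N2 Y I"
    and a: "\<And>j. j \<in> I \<Longrightarrow> a j \<in> sets (N1 j)" and b: "\<And>j. j \<in> I \<Longrightarrow> b j \<in> sets (N2 j)"
  defines "A j \<equiv> X j -` a j \<inter> space M1" and "B j \<equiv> Y j -` b j \<inter> space M2"
  shows "measure (M1 \<Otimes>\<^sub>M M2) (\<Inter>j\<in>I. A j \<times> B j) = (\<Prod>j\<in>I. measure (M1 \<Otimes>\<^sub>M M2) (A j \<times> B j))"
proof -
  interpret M1: prob_space M1 by fact
  interpret M2: prob_space M2 by fact
  have A: "A j \<in> sets M1" and B: "B j \<in> sets M2" if "j \<in> I" for j
    using that a b X Y by (auto simp: A_def B_def M1.indep_vars_def M2.indep_vars_def)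
  have "(\<Inter>j\<in>I. A j \<times> B j) = (\<Inter>j\<in>I. A j) \<times> (\<Inter>j\<in>I. B j)"
    using I(2) by auto
  then have "measure (M1 \<Otimes>\<^sub>M M2) (\<Inter>j\<in>I. A j \<times> B j) = M1.prob (\<Inter>j\<in>I. A j) * M2.prob (\<Inter>j\<in>I. B j)"
    using I A B by (simp add: measure_pair_measure_Times[OF P1 P2] sets.finite_INT)
  also have "\<dots> = (\<Prod>j\<in>I. M1.prob (A j)) * (\<Prod>j\<in>I. M2.prob (B j))"
    using M1.indep_varsD_finite[OF X I(2,1) a] M2.indep_varsD_finite[OF Y I(2,1) b]
    by (simp add: A_def B_def)
  also have "\<dots> = (\<Prod>j\<in>I. measure (M1 \<Otimes>\<^sub>M M2) (A j \<times> B j))"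
    using A B by (simp add: measure_pair_measure_Times[OF P1 P2] prod.distrib)
  finally show ?thesis .
qed

lemma indep_vars_pair_measure:
  assumes P1: "prob_space M1" and P2: "prob_space M2" and I: "finite I"
    and X: "prob_space.indep_vars M1 N1 X I" and Y: "prob_space.indep_vars M2 N2 Y I"
  shows "prob_space.indep_vars (M1 \<Otimes>\<^sub>M M2) (\<lambda>i. N1 i \<Otimes>\<^sub>M N2 i)
           (\<lambda>i \<omega>. (X i (fst \<omega>), Y i (snd \<omega>))) I"
proof -
  interpret M1: prob_space M1 by fact
  interpret M2: prob_space M2 by fact
  interpret P: pair_prob_space M1 M2 ..
  let ?E = "\<lambda>i. {a \<times> b | a b. a \<in> sets (N1 i) \<and> b \<in> sets (N2 i)}"
  let ?Z = "\<lambda>i \<omega>. (X i (fst \<omega>), Y i (snd \<omega>))"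
  show ?thesis
  proof (cases "I = {}")
    case True
    then show ?thesis by (simp add: P.indep_vars_def2 P.indep_sets_def)
  next
    case False
    show ?thesis
    proof (subst P.indep_vars_finite[where E="?E"])
      show "I \<noteq> {}" "finite I" by fact+
      show "sets (N1 i \<Otimes>\<^sub>M N2 i) = sigma_sets (space (N1 i \<Otimes>\<^sub>M N2 i)) (?E i)" for i
        by (simp add: sets_pair_measure space_pair_measure)
      show "?Z i \<in> measurable (M1 \<Otimes>\<^sub>M M2) (N1 i \<Otimes>\<^sub>M N2 i)" if "i \<in> I" for i
        using that X Y by (auto simp: M1.indep_vars_def M2.indep_vars_def
            intro!: measurable_Pair measurable_compose[OF measurable_fst] measurable_compose[OF measurable_snd])
      show "Int_stable (?E i)" for i by (rule Int_stable_pair_measure_generator)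
      show "space (N1 i \<Otimes>\<^sub>M N2 i) \<in> ?E i" for i
        by (auto simp: space_pair_measure)
      show "?E i \<subseteq> Pow (space (N1 i \<Otimes>\<^sub>M N2 i))" for i
        by (auto simp: space_pair_measure dest: sets.sets_into_space)
      show "\<forall>C\<in>Pi I ?E. P.prob (\<Inter>j\<in>I. ?Z j -` C j \<inter> space (M1 \<Otimes>\<^sub>M M2)) =
          (\<Prod>j\<in>I. P.prob (?Z j -` C j \<inter> space (M1 \<Otimes>\<^sub>M M2)))"
      proof
        fix C assume "C \<in> Pi I ?E"
        then obtain a b where C: "\<And>j. j \<in> I \<Longrightarrow> C j = a j \<times> b j"
          and a: "\<And>j. j \<in> I \<Longrightarrow> a j \<in> sets (N1 j)" and b: "\<And>j. j \<in> I \<Longrightarrow> b j \<in> sets (N2 j)"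
          by (simp add: Pi_iff) metis
        have "?Z j -` C j \<inter> space (M1 \<Otimes>\<^sub>M M2) = (X j -` a j \<inter> space M1) \<times> (Y j -` b j \<inter> space M2)"
          if "j \<in> I" for j
          using C[OF that] by (auto simp: space_pair_measure)
        then show "P.prob (\<Inter>j\<in>I. ?Z j -` C j \<inter> space (M1 \<Otimes>\<^sub>M M2)) =
            (\<Prod>j\<in>I. P.prob (?Z j -` C j \<inter> space (M1 \<Otimes>\<^sub>M M2)))"
          using prob_pair_measure_INT_Times[OF P1 P2 I False X Y a b] by simp
      qed
    qed
  qed
qed

lemma (in prob_space) prob_sum_nonneg_le:
  assumes U: "finite U" "U \<noteq> {}" and indep: "indep_vars (\<lambda>_. borel) X U"
    and bounded: "\<And>u x. u \<in> U \<Longrightarrow> X u x \<in> {-1..1}"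
    and mean: "\<And>u. u \<in> U \<Longrightarrow> expectation (X u) \<le> - \<delta>" and \<delta>: "0 \<le> \<delta>"
  shows "prob {x \<in> space M. 0 \<le> (\<Sum>u\<in>U. X u x)} \<le> exp (- real (card U) * \<delta>\<^sup>2 / 2)"
proof -
  define s where "s = (\<Sum>u\<in>U. expectation (X u))"
  interpret H: Hoeffding_ineq M U X "\<lambda>_. -1" "\<lambda>_. 1" s
    by unfold_locales (use U indep bounded in \<open>auto simp: s_def\<close>)
  have s: "s \<le> - (real (card U) * \<delta>)"
    using sum_mono[of U "\<lambda>u. expectation (X u)" "\<lambda>_. - \<delta>"] mean by (simp add: s_def)
  have "0 \<le> - s" using s \<delta> by (smt (verit) mult_nonneg_nonneg of_nat_0_le_iff)
  have "{x \<in> space M. 0 \<le> (\<Sum>u\<in>U. X u x)} \<subseteq> {x \<in> space M. s + (- s) \<le> (\<Sum>u\<in>U. X u x)}"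
    by auto
  then have "prob {x \<in> space M. 0 \<le> (\<Sum>u\<in>U. X u x)}
      \<le> exp (- 2 * (- s)\<^sup>2 / (\<Sum>u\<in>U. (1 - (-1::real))\<^sup>2))"
    using \<open>0 \<le> - s\<close> U by (intro order_trans[OF _ H.Hoeffding_ineq_ge]) (auto intro: finite_measure_mono)
  also have "\<dots> \<le> exp (- real (card U) * \<delta>\<^sup>2 / 2)"
  proof -
    have "(real (card U) * \<delta>)\<^sup>2 \<le> (- s)\<^sup>2" using s \<delta> by (intro power_mono) auto
    moreover have "0 < real (card U)" using U by (simp add: card_gt_0_iff)
    ultimately show ?thesis by (simp add: power2_eq_square field_simps)
  qed
  finally show ?thesis .
qed

lemma (in prob_space) prob_argmax_mem_le:
  fixes s :: "'j \<Rightarrow> 'a \<Rightarrow> real"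
  assumes S: "finite S" and max: "\<And>\<omega>. \<omega> \<in> space M \<Longrightarrow> s l \<omega> \<le> s (jhat \<omega>) \<omega>"
    and events: "\<And>j. j \<in> S \<Longrightarrow> {\<omega> \<in> space M. s l \<omega> \<le> s j \<omega>} \<in> events"
    and bound: "\<And>j. j \<in> S \<Longrightarrow> prob {\<omega> \<in> space M. s l \<omega> \<le> s j \<omega>} \<le> \<beta>"
  shows "prob {\<omega> \<in> space M. jhat \<omega> \<in> S} \<le> real (card S) * \<beta>"
proof -
  have "{\<omega> \<in> space M. jhat \<omega> \<in> S} \<subseteq> (\<Union>j\<in>S. {\<omega> \<in> space M. s l \<omega> \<le> s j \<omega>})"
    using max by force
  then have "prob {\<omega> \<in> space M. jhat \<omega> \<in> S} \<le> prob (\<Union>j\<in>S. {\<omega> \<in> space M. s l \<omega> \<le> s j \<omega>})"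
    using S events by (intro finite_measure_mono) auto
  also have "\<dots> \<le> (\<Sum>j\<in>S. prob {\<omega> \<in> space M. s l \<omega> \<le> s j \<omega>})"
    using S events by (intro finite_measure_subadditive_finite) auto
  also have "\<dots> \<le> real (card S) * \<beta>"
    using sum_mono[of S _ "\<lambda>_. \<beta>", OF bound] by simp
  finally show ?thesis .
qed

section \<open>Bins and parameters\<close>

definition adjacent_bins :: "real \<Rightarrow> nat \<Rightarrow> real set" where
  "adjacent_bins \<tau> j = bin \<tau> (j - 1) \<union> bin \<tau> j \<union> bin \<tau> (j + 1)"

lemma adjacent_bins_borel [measurable]: "adjacent_bins \<tau> j \<in> sets borel"
  unfolding adjacent_bins_def bin_def by auto

lemma mem_binD:
  assumes "x \<in> bin \<tau> k"
  shows "k \<le> loc_J \<tau>" "-1 + 2 * (real k - 1) * \<tau> \<le> x"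
    "k < loc_J \<tau> \<Longrightarrow> x < -1 + 2 * real k * \<tau>"
  using assms by (auto simp: bin_def split: if_splits)

lemma close_mem_adjacent_bins:
  assumes l: "1 \<le> l" and \<theta>: "\<theta> \<in> bin \<tau> l"
    and x: "-1 \<le> x" "x \<le> 1" "\<bar>x - \<theta>\<bar> < 2 * \<tau>"
  shows "x \<in> adjacent_bins \<tau> l"
proof -
  define L where "L = -1 + 2 * (real l - 1) * \<tau>"
  have lJ: "l \<le> loc_J \<tau>" and L_le: "L \<le> \<theta>" using mem_binD[OF \<theta>] by (simp_all add: L_def)
  have \<theta>_less: "\<theta> < L + 2 * \<tau>" if "l < loc_J \<tau>"
    using mem_binD(3)[OF \<theta> that] by (simp add: L_def algebra_simps)
  consider "x < L" | "L \<le> x" "l = loc_J \<tau>" | "L \<le> x" "l < loc_J \<tau>" "x < L + 2 * \<tau>"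
    | "l < loc_J \<tau>" "L + 2 * \<tau> \<le> x"
    using lJ by linarith
  then show ?thesis
  proof cases
    case 1
    then have "2 \<le> l" using l x(1) by (cases "l = 1") (auto simp: L_def)
    then have "x \<in> bin \<tau> (l - 1)"
      using 1 lJ x L_le by (auto simp: bin_def L_def of_nat_diff algebra_simps)
    then show ?thesis by (simp add: adjacent_bins_def)
  next
    case 2
    then have "x \<in> bin \<tau> l" using x by (auto simp: bin_def L_def)
    then show ?thesis by (simp add: adjacent_bins_def)
  next
    case 3
    then have "x \<in> bin \<tau> l" using l x by (auto simp: bin_def L_def algebra_simps)
    then show ?thesis by (simp add: adjacent_bins_def)
  next
    case 4
    then have "x \<in> bin \<tau> (l + 1)"
      using l x \<theta>_less by (auto simp: bin_def L_def algebra_simps)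
    then show ?thesis by (simp add: adjacent_bins_def)
  qed
qed

lemma far_adjacent_bins_dist_ge:
  assumes \<tau>: "0 < \<tau>" and \<theta>: "\<theta> \<in> bin \<tau> l" and far: "2 < \<bar>int j - int l\<bar>"
    and x: "x \<in> adjacent_bins \<tau> j"
  shows "2 * \<tau> \<le> \<bar>x - \<theta>\<bar>"
proof -
  obtain k where k: "x \<in> bin \<tau> k" "k = j - 1 \<or> k = j \<or> k = j + 1"
    using x by (auto simp: adjacent_bins_def)
  show ?thesis
  proof (cases "l < j")
    case True
    then have "l + 2 \<le> k" using far k(2) by auto
    then have "l < loc_J \<tau>" and "(real l + 1) * \<tau> \<le> (real k - 1) * \<tau>"
      using mem_binD(1)[OF k(1)] \<tau> by (auto intro!: mult_right_mono)
    then show ?thesis using mem_binD(2)[OF k(1)] mem_binD(3)[OF \<theta>] by (simp add: algebra_simps)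
  next
    case False
    then have "k + 2 \<le> l" using far k(2) by auto
    then have "k < loc_J \<tau>" and "real k * \<tau> \<le> (real l - 2) * \<tau>"
      using mem_binD(1)[OF \<theta>] \<tau> by (auto intro!: mult_right_mono)
    then show ?thesis using mem_binD(3)[OF k(1)] mem_binD(2)[OF \<theta>] by (simp add: algebra_simps)
  qed
qed

lemma card_far_bins_le:
  assumes \<tau>: "0 < \<tau>" and l: "l \<in> {1..loc_J \<tau>}"
  shows "real (card {j \<in> {1..loc_J \<tau>}. 2 < \<bar>int j - int l\<bar>}) \<le> 1 / \<tau>"
proof -
  let ?J = "loc_J \<tau>"
  have "card {j \<in> {1..?J}. 2 < \<bar>int j - int l\<bar>} \<le> card ({1..l - 3} \<union> {l + 3..?J})"
    by (intro card_mono) auto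
  also have "\<dots> \<le> card {1..l - 3} + card {l + 3..?J}" by (rule card_Un_le)
  also have "\<dots> \<le> ?J - 3" using l by auto
  finally have card_le: "card {j \<in> {1..?J}. 2 < \<bar>int j - int l\<bar>} \<le> ?J - 3" .
  have "real ?J < 1 / \<tau> + 1"
    using \<tau> by (simp add: loc_J_def) linarith
  then have "real (?J - 3) \<le> 1 / \<tau>" using \<tau> by (cases "3 \<le> ?J") (auto simp: of_nat_diff)
  with card_le show ?thesis by (meson of_nat_le_iff order_trans)
qed

lemma loc_tau_pos: "1 \<le> mt \<Longrightarrow> 0 < loc_tau mt n \<alpha>"
  by (simp add: loc_tau_def)

lemma exp_loc_tau_le:
  assumes mt: "1 \<le> mt"
  shows "exp (- 2 * real mt * (loc_tau mt n \<alpha>)\<^sup>2) \<le> 1 / 4096"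
proof -
  define y where "y = 8 * max (sqrt (real mt * real n * \<alpha>\<^sup>2)) 1"
  have y: "8 \<le> y" by (simp add: y_def)
  have "2 * real mt * (loc_tau mt n \<alpha>)\<^sup>2 = real (4::nat) * ln y"
    using mt y by (simp add: loc_tau_def y_def[symmetric])
  then have "exp (2 * real mt * (loc_tau mt n \<alpha>)\<^sup>2) = y ^ 4"
    using y by (simp only: exp_of_nat_mult) simp
  then have "exp (- 2 * real mt * (loc_tau mt n \<alpha>)\<^sup>2) = inverse (y ^ 4)"
    by (simp add: exp_minus)
  also have "\<dots> \<le> inverse (8 ^ 4)"
    using y by (intro le_imp_inverse_le power_mono) auto
  finally show ?thesis by simp
qed

lemma rr_prob_bounds:
  assumes "0 < \<alpha>"
  shows "1 / 2 < rr_prob \<alpha>" "rr_prob \<alpha> < 1"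
proof -
  define E where "E = exp (\<alpha> / 6)"
  have "1 < E" using assms by (simp add: E_def)
  then show "1 / 2 < rr_prob \<alpha>" "rr_prob \<alpha> < 1"
    by (simp_all add: rr_prob_def E_def[symmetric] field_simps)
qed

lemma rr_prob_bias_ge:
  assumes \<alpha>: "0 < \<alpha>" "\<alpha> \<le> 22 / 35"
  shows "1000 * \<alpha> / 12018 \<le> 2 * rr_prob \<alpha> - 1"
proof -
  define x where "x = \<alpha> / 6"
  define E where "E = exp x"
  have x: "0 < x" "x \<le> 11 / 105" using \<alpha> by (auto simp: x_def)
  have E: "1 < E" using x by (simp add: E_def)
  \<comment> \<open>The claim amounts to E (2003 - 1000 x) \<ge> 2003 + 1000 x. The quadratic Taylor bound for E
    itself is too weak for x up to 11/105; its square for exp (x/2) is a quartic bound that suffices.\<close>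
  have "(1 + x / 2 + (x / 2)\<^sup>2 / 2)\<^sup>2 \<le> (exp (x / 2))\<^sup>2"
    using x by (intro power_mono exp_lower_Taylor_quadratic) (auto simp: power2_eq_square)
  then have E_ge: "(1 + x / 2 + x\<^sup>2 / 8)\<^sup>2 \<le> E"
    by (simp add: E_def power2_eq_square power_divide flip: exp_add)
  have "x ^ 2 \<le> (11/105) ^ 2" "x ^ 3 \<le> (11/105) ^ 3" "x ^ 4 \<le> (11/105) ^ 4"
    using x by (intro power_mono; simp)+
  then have "0 \<le> 3 + 3/2 * x - 1997/8 * x ^ 2 - 5997/64 * x ^ 3 - 125/8 * x ^ 4"
    using x by (simp add: power_divide)
  with x(1) have "0 \<le> x * (3 + 3/2 * x - 1997/8 * x ^ 2 - 5997/64 * x ^ 3 - 125/8 * x ^ 4)"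
    by simp
  also have "\<dots> = (1 + x / 2 + x\<^sup>2 / 8)\<^sup>2 * (2003 - 1000 * x) - 2003 - 1000 * x"
    by (simp add: power2_eq_square power3_eq_cube power4_eq_xxxx algebra_simps)
  also have "\<dots> \<le> E * (2003 - 1000 * x) - 2003 - 1000 * x"
    using E_ge x by (simp add: mult_right_mono)
  finally have "1000 * x / 2003 \<le> (E - 1) / (E + 1)"
    using E by (simp add: field_simps)
  also have "(E - 1) / (E + 1) = 2 * rr_prob \<alpha> - 1"
  proof -
    have "rr_prob \<alpha> = E / (1 + E)" by (simp add: rr_prob_def E_def x_def)
    then show ?thesis using E by (simp add: field_simps)
  qed
  finally show ?thesis by (simp add: x_def)
qed

lemma localisation_exponent_le:
  fixes \<alpha> q e p :: real
  assumes bias: "1000 * \<alpha> / 12018 \<le> 2 * q - 1" and e: "e \<le> 1 / 4096"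
    and \<alpha>: "0 < \<alpha>" and p: "0 \<le> p"
  shows "real n * \<alpha>\<^sup>2 * p\<^sup>2 / 579 \<le> real n * ((2 * q - 1) * (1 - 4 * e) * p)\<^sup>2 / 4"
proof -
  define c :: real where "c = (1000 / 12018) * (1023 / 1024)"
  have "(1000 * \<alpha> / 12018) * (1023 / 1024) \<le> (2 * q - 1) * (1 - 4 * e)"
    using bias e \<alpha> by (intro mult_mono) auto
  then have "c * \<alpha> \<le> (2 * q - 1) * (1 - 4 * e)" by (simp add: c_def)
  then have "c * \<alpha> * p \<le> (2 * q - 1) * (1 - 4 * e) * p" using p by (rule mult_right_mono)
  moreover have "0 \<le> c * \<alpha> * p" using \<alpha> p by (simp add: c_def)
  ultimately have "(c * \<alpha> * p)\<^sup>2 \<le> ((2 * q - 1) * (1 - 4 * e) * p)\<^sup>2"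
    by (intro power_mono)
  moreover have "\<alpha>\<^sup>2 * p\<^sup>2 / 579 \<le> (c * \<alpha> * p)\<^sup>2 / 4"
  proof -
    have "(\<alpha> * p)\<^sup>2 * (1 / 579) \<le> (\<alpha> * p)\<^sup>2 * (c\<^sup>2 / 4)"
      by (intro mult_left_mono) (simp_all add: c_def power2_eq_square)
    then show ?thesis by (simp add: power_mult_distrib mult_ac)
  qed
  ultimately show ?thesis
    by (simp add: mult.assoc divide_right_mono mult_left_mono flip: times_divide_eq_right)
qed

section \<open>Votes of a single user\<close>

definition row_mean :: "nat \<Rightarrow> nat \<Rightarrow> (nat \<times> nat \<Rightarrow> real) \<Rightarrow> real" where
  "row_mean u i x = (\<Sum>t = 1..i. x (u, t)) / real i"

lemma row_mean_bounds:
  assumes "\<forall>t. x (u, t) \<in> {-1..1}" "1 \<le> i"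
  shows "-1 \<le> row_mean u i x" "row_mean u i x \<le> 1"
proof -
  have "(\<Sum>t = 1..i. -1) \<le> (\<Sum>t = 1..i. x (u, t))" "(\<Sum>t = 1..i. x (u, t)) \<le> (\<Sum>t = 1..i. 1)"
    using assms(1) by (intro sum_mono; simp)+
  then show "-1 \<le> row_mean u i x" "row_mean u i x \<le> 1"
    using assms(2) by (simp_all add: row_mean_def field_simps)
qed

(* V and Vt of the paper as functions of one user's sample size i, sample array x and coins c,
   so that the three independent components of loc_space can be integrated out one at a time. *)
definition vote :: "real \<Rightarrow> nat \<Rightarrow> nat \<Rightarrow> nat \<Rightarrow> nat \<Rightarrow> (nat \<times> nat \<Rightarrow> real) \<Rightarrow> real" where
  "vote \<tau> mt u j i x = (if mt \<le> i then indicator (adjacent_bins \<tau> j) (row_mean u i x) else 0)"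

definition noisy_vote ::
  "real \<Rightarrow> nat \<Rightarrow> nat \<Rightarrow> nat \<Rightarrow> nat \<Rightarrow> (nat \<times> nat \<Rightarrow> real) \<Rightarrow> (nat \<times> nat \<Rightarrow> bool) \<Rightarrow> real" where
  "noisy_vote \<tau> mt u j i x c = (if c (u, j) then vote \<tau> mt u j i x else 1 - vote \<tau> mt u j i x)"

lemma Vt_eq_noisy_vote: "Vt \<tau> mt \<omega> u j = noisy_vote \<tau> mt u j (fst \<omega> u) (fst (snd \<omega>)) (snd (snd \<omega>))"
  by (simp add: Vt_def V_def noisy_vote_def vote_def adjacent_bins_def row_mean_def Xbar_def
      m_of_def X_of_def B_of_def)

lemma vote_01: "vote \<tau> mt u j i x \<in> {0, 1}"
  by (simp add: vote_def indicator_def)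

lemma noisy_vote_bounds: "noisy_vote \<tau> mt u j i x c \<in> {0..1}"
  using vote_01[of \<tau> mt u j i x] by (auto simp: noisy_vote_def)

lemma vote_gap_le:
  assumes \<tau>: "0 < \<tau>" and l: "1 \<le> l" and \<theta>: "\<theta> \<in> bin \<tau> l" and far: "2 < \<bar>int j - int l\<bar>"
    and i: "mt \<le> i" "1 \<le> i" and x: "\<forall>t. x (u, t) \<in> {-1..1}"
  shows "vote \<tau> mt u j i x - vote \<tau> mt u l i x
           \<le> -1 + 2 * indicator {x. 2 * \<tau> \<le> \<bar>row_mean u i x - \<theta>\<bar>} x"
proof (cases "2 * \<tau> \<le> \<bar>row_mean u i x - \<theta>\<bar>")
  case True
  then show ?thesis using vote_01[of \<tau> mt u j i x] vote_01[of \<tau> mt u l i x] by auto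
next
  case False
  then have "row_mean u i x \<in> adjacent_bins \<tau> l"
    using close_mem_adjacent_bins[OF l \<theta>] row_mean_bounds[OF x i(2)] by simp
  moreover have "row_mean u i x \<notin> adjacent_bins \<tau> j"
    using far_adjacent_bins_dist_ge[OF \<tau> \<theta> far] False by force
  ultimately show ?thesis using False i by (simp add: vote_def)
qed

lemma integrable_noisy_vote_coins:
  assumes "(u, j) \<in> L"
  shows "integrable (PiM L (\<lambda>_. measure_pmf (bernoulli_pmf q))) (noisy_vote \<tau> mt u j i x)"
proof -
  interpret prob_space "PiM L (\<lambda>_. measure_pmf (bernoulli_pmf q))"
    by (intro prob_space_PiM measure_pmf.prob_space_axioms)
  show ?thesis
    using noisy_vote_bounds[of \<tau> mt u j i x] assms unfolding noisy_vote_def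
    by (intro integrable_const_bound[where B=1])
      (auto intro!: AE_I2 measurable_compose[OF measurable_component_singleton[OF assms]])
qed

lemma integral_noisy_vote_coins:
  assumes "(u, j) \<in> L" and q: "0 \<le> q" "q \<le> 1"
  shows "(\<integral>c. noisy_vote \<tau> mt u j i x c \<partial>PiM L (\<lambda>_. measure_pmf (bernoulli_pmf q)))
           = (2 * q - 1) * vote \<tau> mt u j i x + (1 - q)"
proof -
  have "(\<integral>c. noisy_vote \<tau> mt u j i x c \<partial>PiM L (\<lambda>_. measure_pmf (bernoulli_pmf q)))
      = (\<integral>b. (if b then vote \<tau> mt u j i x else 1 - vote \<tau> mt u j i x) \<partial>measure_pmf (bernoulli_pmf q))"
    unfolding noisy_vote_def
    by (rule integral_PiM_component[OF measure_pmf.prob_space_axioms assms(1)]) simp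
  then show ?thesis using q by (simp add: algebra_simps)
qed

locale bounded_sample_distribution = prob_space \<mu> for \<mu> :: "real measure" +
  assumes sets_eq_borel: "sets \<mu> = sets borel" and bounded: "measure \<mu> {-1..1} = 1"
begin

lemma prob_space_rows: "prob_space (PiM K (\<lambda>_. \<mu>))"
  by (simp add: prob_space_PiM prob_space_axioms)

lemma row_coordinate_measurable:
  fixes K :: "(nat \<times> nat) set"
  shows "(u, t) \<in> K \<Longrightarrow> (\<lambda>x. x (u, t)) \<in> borel_measurable (PiM K (\<lambda>_. \<mu>))"
  using measurable_component_singleton[of "(u, t)" K "\<lambda>_. \<mu>"] by (simp add: sets_eq_borel cong: measurable_cong_sets)

lemma row_mean_measurable:
  fixes K :: "(nat \<times> nat) set"
  shows "(\<And>t. (u, t) \<in> K) \<Longrightarrow> row_mean u i \<in> borel_measurable (PiM K (\<lambda>_. \<mu>))"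
  unfolding row_mean_def by (intro borel_measurable_divide borel_measurable_sum row_coordinate_measurable) auto

lemma AE_row_bounded:
  fixes K :: "(nat \<times> nat) set"
  assumes "\<And>t. (u, t) \<in> K"
  shows "AE x in PiM K (\<lambda>_. \<mu>). \<forall>t. x (u, t) \<in> {-1..1}"
proof -
  have "AE y in \<mu>. y \<in> {-1..1}" using bounded by (intro AE_prob_1)
  then have "AE x in PiM K (\<lambda>_. \<mu>). x (u, t) \<in> {-1..1}" for t
    using assms by (intro AE_PiM_component) (auto intro: prob_space_axioms)
  then have "\<forall>t. AE x in PiM K (\<lambda>_. \<mu>). x (u, t) \<in> {-1..1}" by blast
  then show ?thesis by (rule AE_all_countable[THEN iffD2])
qed

lemma row_mean_deviation_prob:
  fixes K :: "(nat \<times> nat) set"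
  assumes K: "\<And>t. (u, t) \<in> K" and i: "1 \<le> i" and c: "0 \<le> c"
  shows "measure (PiM K (\<lambda>_. \<mu>)) {x \<in> space (PiM K (\<lambda>_. \<mu>)). c \<le> \<bar>row_mean u i x - (\<integral>y. y \<partial>\<mu>)\<bar>}
           \<le> 2 * exp (- real i * c\<^sup>2 / 2)"
proof -
  let ?B = "PiM K (\<lambda>_. \<mu>)"
  let ?\<theta> = "\<integral>y. y \<partial>\<mu>"
  interpret B: prob_space ?B by (rule prob_space_rows)
  have indep: "B.indep_vars (\<lambda>_. borel) (\<lambda>t x. x (u, t)) {1..i}"
  proof -
    have "B.indep_vars (\<lambda>_. \<mu>) (\<lambda>t x. x (u, t)) {1..i}"
      using indep_vars_PiM_components[of K "\<lambda>_. \<mu>" "Pair u" "{1..i}"] K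
      by (auto intro: prob_space_axioms inj_onI)
    then have "B.indep_vars (\<lambda>_. borel) (\<lambda>t x. (\<lambda>y. y) (x (u, t))) {1..i}"
      by (rule B.indep_vars_compose2) (rule measurable_ident_sets[OF sets_eq_borel])
    then show ?thesis by simp
  qed
  have expectation: "B.expectation (\<lambda>x. x (u, t)) = ?\<theta>" for t
    using integral_PiM_component[of K "\<lambda>_. \<mu>" "(u, t)" "\<lambda>y. y"] K
    by (simp add: prob_space_axioms sets_eq_borel cong: measurable_cong_sets)
  interpret H: Hoeffding_ineq ?B "{1..i}" "\<lambda>t x. x (u, t)" "\<lambda>_. -1" "\<lambda>_. 1" "real i * ?\<theta>"
    by unfold_locales
      (use indep AE_row_bounded[OF K] in \<open>auto simp: expectation elim!: eventually_mono\<close>)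
  have "\<bar>(\<Sum>t\<in>{1..i}. x (u, t)) - real i * ?\<theta>\<bar> = real i * \<bar>row_mean u i x - ?\<theta>\<bar>" for x
    using i by (simp add: row_mean_def abs_mult[symmetric] field_simps)
  then have "{x \<in> space ?B. c \<le> \<bar>row_mean u i x - ?\<theta>\<bar>}
      = {x \<in> space ?B. real i * c \<le> \<bar>(\<Sum>t\<in>{1..i}. x (u, t)) - real i * ?\<theta>\<bar>}"
    using i by auto
  also have "B.prob \<dots> \<le> 2 * exp (- 2 * (real i * c)\<^sup>2 / (\<Sum>t\<in>{1..i}. ((1::real) - -1)\<^sup>2))"
    using i c by (intro H.Hoeffding_ineq_abs_ge) auto
  also have "- 2 * (real i * c)\<^sup>2 / (\<Sum>t\<in>{1..i}. ((1::real) - -1)\<^sup>2) = - real i * c\<^sup>2 / 2"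
    using i by (simp add: power2_eq_square field_simps)
  finally show ?thesis .
qed

lemma vote_measurable:
  fixes K :: "(nat \<times> nat) set"
  assumes "\<And>t. (u, t) \<in> K"
  shows "vote \<tau> mt u j i \<in> borel_measurable (PiM K (\<lambda>_. \<mu>))"
proof -
  note [measurable] = row_mean_measurable[OF assms]
  show ?thesis unfolding vote_def[abs_def] by measurable
qed

lemma noisy_vote_measurable:
  fixes K L :: "(nat \<times> nat) set"
  assumes K: "\<And>t. (u, t) \<in> K" and L: "(u, j) \<in> L"
  shows "(\<lambda>r. noisy_vote \<tau> mt u j i (fst r) (snd r))
           \<in> borel_measurable (PiM K (\<lambda>_. \<mu>) \<Otimes>\<^sub>M PiM L (\<lambda>_. measure_pmf (bernoulli_pmf q)))"
proof -
  note [measurable] = vote_measurable[OF K]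
    measurable_component_singleton[OF L, of "\<lambda>_. measure_pmf (bernoulli_pmf q)", simplified]
  show ?thesis unfolding noisy_vote_def by measurable
qed

lemma integral_vote_gap_le:
  fixes K :: "(nat \<times> nat) set"
  assumes K: "\<And>t. (u, t) \<in> K" and \<tau>: "0 < \<tau>" and l: "1 \<le> l"
    and \<theta>: "(\<integral>y. y \<partial>\<mu>) \<in> bin \<tau> l" and far: "2 < \<bar>int j - int l\<bar>"
    and i: "mt \<le> i" and mt: "1 \<le> mt"
  shows "(\<integral>x. vote \<tau> mt u j i x - vote \<tau> mt u l i x \<partial>PiM K (\<lambda>_. \<mu>))
           \<le> 4 * exp (- 2 * real mt * \<tau>\<^sup>2) - 1"
proof -
  let ?B = "PiM K (\<lambda>_. \<mu>)"
  interpret B: prob_space ?B by (rule prob_space_rows)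
  define S where "S = {x \<in> space ?B. 2 * \<tau> \<le> \<bar>row_mean u i x - (\<integral>y. y \<partial>\<mu>)\<bar>}"
  have S: "S \<in> B.events"
    using row_mean_measurable[OF K] unfolding S_def by measurable
  have "AE x in ?B. vote \<tau> mt u j i x - vote \<tau> mt u l i x \<le> -1 + 2 * indicator S x"
    using AE_row_bounded[OF K] AE_space
  proof eventually_elim
    case (elim x)
    then show ?case
      using vote_gap_le[OF \<tau> l \<theta> far i _ elim(1)] mt i by (simp add: S_def indicator_def)
  qed
  then have "(\<integral>x. vote \<tau> mt u j i x - vote \<tau> mt u l i x \<partial>?B) \<le> (\<integral>x. -1 + 2 * indicator S x \<partial>?B)"
  proof (rule integral_mono_AE[rotated 2])
    have "\<bar>vote \<tau> mt u j i x - vote \<tau> mt u l i x\<bar> \<le> 1" for x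
      using vote_01[of \<tau> mt u j i x] vote_01[of \<tau> mt u l i x] by auto
    then show "integrable ?B (\<lambda>x. vote \<tau> mt u j i x - vote \<tau> mt u l i x)"
      using vote_measurable[OF K]
      by (intro B.integrable_const_bound[where B=1]) (auto intro!: AE_I2)
    show "integrable ?B (\<lambda>x. -1 + 2 * indicator S x :: real)"
      using S by (intro Bochner_Integration.integrable_add integrable_mult_right integrable_real_indicator)
        (auto simp: B.emeasure_eq_measure)
  qed
  also have "\<dots> = -1 + 2 * B.prob S"
    using S by (simp add: B.emeasure_eq_measure B.prob_space)
  also have "B.prob S \<le> 2 * exp (- real i * (2 * \<tau>)\<^sup>2 / 2)"
    unfolding S_def using \<tau> i mt by (intro row_mean_deviation_prob[OF K]) auto
  also have "\<dots> \<le> 2 * exp (- 2 * real mt * \<tau>\<^sup>2)"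
  proof -
    have "real mt * \<tau>\<^sup>2 \<le> real i * \<tau>\<^sup>2" using i by (intro mult_right_mono) auto
    then show ?thesis by (simp add: power_mult_distrib)
  qed
  finally show ?thesis by simp
qed

lemma integral_noisy_vote_gap:
  fixes K L :: "(nat \<times> nat) set"
  assumes K: "\<And>t. (u, t) \<in> K" and L: "(u, j) \<in> L" "(u, l) \<in> L" and q: "0 \<le> q" "q \<le> 1"
  shows "(\<integral>r. noisy_vote \<tau> mt u j i (fst r) (snd r) - noisy_vote \<tau> mt u l i (fst r) (snd r)
            \<partial>(PiM K (\<lambda>_. \<mu>) \<Otimes>\<^sub>M PiM L (\<lambda>_. measure_pmf (bernoulli_pmf q))))
         = (2 * q - 1) * (\<integral>x. vote \<tau> mt u j i x - vote \<tau> mt u l i x \<partial>PiM K (\<lambda>_. \<mu>))"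
proof -
  let ?B = "PiM K (\<lambda>_. \<mu>)"
  let ?C = "PiM L (\<lambda>_. measure_pmf (bernoulli_pmf q))"
  interpret B: prob_space ?B by (rule prob_space_rows)
  interpret C: prob_space ?C by (intro prob_space_PiM measure_pmf.prob_space_axioms)
  interpret BC: pair_prob_space ?B ?C ..
  have "integrable (?B \<Otimes>\<^sub>M ?C) (\<lambda>r. noisy_vote \<tau> mt u k i (fst r) (snd r))"
    if "(u, k) \<in> L" for k
    using noisy_vote_bounds[of \<tau> mt u k i] noisy_vote_measurable[OF K that]
    by (intro BC.P.integrable_const_bound[where B=1]) (auto intro!: AE_I2)
  then have integrable_gap: "integrable (?B \<Otimes>\<^sub>M ?C)
      (\<lambda>r. noisy_vote \<tau> mt u j i (fst r) (snd r) - noisy_vote \<tau> mt u l i (fst r) (snd r))"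
    using L by (intro Bochner_Integration.integrable_diff)
  have "(\<integral>r. noisy_vote \<tau> mt u j i (fst r) (snd r) - noisy_vote \<tau> mt u l i (fst r) (snd r) \<partial>(?B \<Otimes>\<^sub>M ?C))
      = (\<integral>x. (\<integral>c. noisy_vote \<tau> mt u j i x c - noisy_vote \<tau> mt u l i x c \<partial>?C) \<partial>?B)"
    using BC.integral_fst'[OF integrable_gap] by simp
  also have "\<dots> = (\<integral>x. (2 * q - 1) * (vote \<tau> mt u j i x - vote \<tau> mt u l i x) \<partial>?B)"
    using L q by (intro Bochner_Integration.integral_cong refl)
      (simp add: integrable_noisy_vote_coins integral_noisy_vote_coins algebra_simps)
  finally show ?thesis by simp
qed

end

section \<open>Independence of the users and concentration of the scores\<close>

definition noisy_vote_gap :: "real \<Rightarrow> nat \<Rightarrow> nat \<Rightarrow> nat \<Rightarrow> nat \<Rightarrow> loc_omega \<Rightarrow> real" where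
  "noisy_vote_gap \<tau> mt j l u \<omega> = Vt \<tau> mt \<omega> u j - Vt \<tau> mt \<omega> u l"

lemma score_diff_eq_sum_noisy_vote_gap:
  "score \<tau> mt n \<omega> j - score \<tau> mt n \<omega> l = (\<Sum>u = 1..n div 2. noisy_vote_gap \<tau> mt j l u \<omega>)"
  by (simp add: score_def noisy_vote_gap_def sum_subtractf)

lemma noisy_vote_gap_bounds: "noisy_vote_gap \<tau> mt j l u \<omega> \<in> {-1..1}"
  using noisy_vote_bounds[of \<tau> mt u j "fst \<omega> u" "fst (snd \<omega>)" "snd (snd \<omega>)"]
    noisy_vote_bounds[of \<tau> mt u l "fst \<omega> u" "fst (snd \<omega>)" "snd (snd \<omega>)"]
  by (auto simp: noisy_vote_gap_def Vt_eq_noisy_vote)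

definition user_space :: "nat pmf \<Rightarrow> real measure \<Rightarrow> nat \<Rightarrow> real \<Rightarrow> nat \<Rightarrow>
    (nat \<times> (nat \<times> nat \<Rightarrow> real) \<times> (nat \<times> nat \<Rightarrow> bool)) measure" where
  "user_space M \<mu> J q u =
     measure_pmf M \<Otimes>\<^sub>M (PiM ({u} \<times> UNIV) (\<lambda>_. \<mu>)
     \<Otimes>\<^sub>M PiM ({u} \<times> {1..J}) (\<lambda>_. measure_pmf (bernoulli_pmf q)))"

definition user_data :: "nat \<Rightarrow> nat \<Rightarrow> loc_omega \<Rightarrow> nat \<times> (nat \<times> nat \<Rightarrow> real) \<times> (nat \<times> nat \<Rightarrow> bool)" where
  "user_data J u \<omega> = (fst \<omega> u, restrict (fst (snd \<omega>)) ({u} \<times> UNIV), restrict (snd (snd \<omega>)) ({u} \<times> {1..J}))"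

lemma Vt_eq_user_data:
  "j \<in> {1..J} \<Longrightarrow> Vt \<tau> mt \<omega> u j =
     (\<lambda>(i, x, c). noisy_vote \<tau> mt u j i x c) (user_data J u \<omega>)"
  by (simp add: Vt_eq_noisy_vote user_data_def noisy_vote_def vote_def row_mean_def)

lemma prob_space_loc_space: "prob_space \<mu> \<Longrightarrow> prob_space (loc_space M \<mu> n J q)"
  unfolding loc_space_def by (intro prob_space_pair prob_space_PiM measure_pmf.prob_space_axioms)

lemma indep_vars_user_data:
  assumes \<mu>: "prob_space \<mu>"
  shows "prob_space.indep_vars (loc_space M \<mu> n J q) (user_space M \<mu> J q) (user_data J) {1..n div 2}"
proof -
  define U where "U = {1..n div 2}"
  let ?A = "PiM U (\<lambda>_. measure_pmf M)"
  let ?B = "PiM (U \<times> UNIV) (\<lambda>_. \<mu>)"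
  let ?C = "PiM (U \<times> {1..J}) (\<lambda>_. measure_pmf (bernoulli_pmf q))"
  interpret A: prob_space ?A by (intro prob_space_PiM measure_pmf.prob_space_axioms)
  interpret B: prob_space ?B by (rule prob_space_PiM[OF \<mu>])
  interpret C: prob_space ?C by (intro prob_space_PiM measure_pmf.prob_space_axioms)
  interpret BC: pair_prob_space ?B ?C ..
  have U: "finite U" by (simp add: U_def)
  have sizes: "A.indep_vars (\<lambda>_. measure_pmf M) (\<lambda>u a. a u) U"
    using indep_vars_PiM_components[of U "\<lambda>_. measure_pmf M" "\<lambda>u. u" U]
    by (simp add: measure_pmf.prob_space_axioms)
  have samples: "B.indep_vars (\<lambda>u. PiM ({u} \<times> UNIV) (\<lambda>_. \<mu>)) (\<lambda>u x. restrict x ({u} \<times> UNIV)) U"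
  proof (rule B.indep_vars_restrict)
    show "B.indep_vars (\<lambda>_. \<mu>) (\<lambda>k x. x k) (U \<times> UNIV)"
      using indep_vars_PiM_components[of "U \<times> UNIV" "\<lambda>_. \<mu>" "\<lambda>k. k" "U \<times> UNIV"] \<mu> by simp
  qed (auto simp: disjoint_family_on_def)
  have coins: "C.indep_vars (\<lambda>u. PiM ({u} \<times> {1..J}) (\<lambda>_. measure_pmf (bernoulli_pmf q)))
      (\<lambda>u c. restrict c ({u} \<times> {1..J})) U"
  proof (rule C.indep_vars_restrict)
    show "C.indep_vars (\<lambda>_. measure_pmf (bernoulli_pmf q)) (\<lambda>k c. c k) (U \<times> {1..J})"
      using indep_vars_PiM_components[of "U \<times> {1..J}" "\<lambda>_. measure_pmf (bernoulli_pmf q)" "\<lambda>k. k"]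
      by (simp add: measure_pmf.prob_space_axioms)
  qed (auto simp: disjoint_family_on_def)
  have "BC.indep_vars
      (\<lambda>u. PiM ({u} \<times> UNIV) (\<lambda>_. \<mu>) \<Otimes>\<^sub>M PiM ({u} \<times> {1..J}) (\<lambda>_. measure_pmf (bernoulli_pmf q)))
      (\<lambda>u r. (restrict (fst r) ({u} \<times> UNIV), restrict (snd r) ({u} \<times> {1..J}))) U"
    by (rule indep_vars_pair_measure[OF B.prob_space_axioms C.prob_space_axioms U samples coins])
  from indep_vars_pair_measure[OF A.prob_space_axioms BC.P.prob_space_axioms U sizes this]
  show ?thesis
    by (simp add: U_def loc_space_def user_space_def[abs_def] user_data_def[abs_def])
qed

context bounded_sample_distribution
begin

lemma user_noisy_vote_measurable:
  assumes "j \<in> {1..J}"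
  shows "(\<lambda>(i, x, c). noisy_vote \<tau> mt u j i x c) \<in> borel_measurable (user_space M \<mu> J q u)"
proof -
  have "(\<lambda>y. (\<lambda>i y. noisy_vote \<tau> mt u j i (fst (snd y)) (snd (snd y))) (fst y) y)
      \<in> borel_measurable (user_space M \<mu> J q u)"
    unfolding user_space_def
  proof (rule measurable_compose_countable[OF measurable_compose[OF measurable_snd]])
    show "(\<lambda>r. noisy_vote \<tau> mt u j i (fst r) (snd r)) \<in> borel_measurable
        (PiM ({u} \<times> UNIV) (\<lambda>_. \<mu>) \<Otimes>\<^sub>M PiM ({u} \<times> {1..J}) (\<lambda>_. measure_pmf (bernoulli_pmf q)))" for i
      using assms by (intro noisy_vote_measurable) auto
  qed simp
  then show ?thesis by (simp add: case_prod_beta')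
qed

lemma user_data_measurable:
  "u \<in> {1..n div 2} \<Longrightarrow> user_data J u \<in> measurable (loc_space M \<mu> n J q) (user_space M \<mu> J q u)"
  using indep_vars_user_data[OF prob_space_axioms, of M n J q]
  unfolding prob_space.indep_vars_def[OF prob_space_loc_space[OF prob_space_axioms]] by blast

lemma Vt_measurable:
  assumes u: "u \<in> {1..n div 2}" and j: "j \<in> {1..J}"
  shows "(\<lambda>\<omega>. Vt \<tau> mt \<omega> u j) \<in> borel_measurable (loc_space M \<mu> n J q)"
  unfolding Vt_eq_user_data[OF j]
  by (rule measurable_compose[OF user_data_measurable[OF u] user_noisy_vote_measurable[OF j]])

lemma noisy_vote_gap_measurable:
  "u \<in> {1..n div 2} \<Longrightarrow> j \<in> {1..J} \<Longrightarrow> l \<in> {1..J} \<Longrightarrow>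
    noisy_vote_gap \<tau> mt j l u \<in> borel_measurable (loc_space M \<mu> n J q)"
  unfolding noisy_vote_gap_def by (intro borel_measurable_diff Vt_measurable)

lemma score_measurable:
  "j \<in> {1..J} \<Longrightarrow> (\<lambda>\<omega>. score \<tau> mt n \<omega> j) \<in> borel_measurable (loc_space M \<mu> n J q)"
  unfolding score_def by (intro borel_measurable_sum Vt_measurable) auto

lemma indep_vars_noisy_vote_gap:
  assumes j: "j \<in> {1..J}" and l: "l \<in> {1..J}"
  shows "prob_space.indep_vars (loc_space M \<mu> n J q) (\<lambda>_. borel) (noisy_vote_gap \<tau> mt j l) {1..n div 2}"
proof -
  interpret P: prob_space "loc_space M \<mu> n J q" by (rule prob_space_loc_space[OF prob_space_axioms])
  define g where "g u y = (\<lambda>(i, x, c). noisy_vote \<tau> mt u j i x c) y - (\<lambda>(i, x, c). noisy_vote \<tau> mt u l i x c) y"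
    for u y
  have "P.indep_vars (\<lambda>_. borel) (\<lambda>u \<omega>. g u (user_data J u \<omega>)) {1..n div 2}"
  proof (rule P.indep_vars_compose2[OF indep_vars_user_data[OF prob_space_axioms]])
    show "g u \<in> borel_measurable (user_space M \<mu> J q u)" for u
      unfolding g_def[abs_def]
      by (intro borel_measurable_diff user_noisy_vote_measurable[OF j] user_noisy_vote_measurable[OF l])
  qed
  moreover have "g u (user_data J u \<omega>) = noisy_vote_gap \<tau> mt j l u \<omega>" for u \<omega>
    by (simp add: g_def noisy_vote_gap_def Vt_eq_user_data[OF j] Vt_eq_user_data[OF l])
  ultimately show ?thesis by simp
qed

lemma integral_noisy_vote_gap_given_size_le:
  fixes K L :: "(nat \<times> nat) set"
  assumes K: "\<And>t. (u, t) \<in> K" and L: "(u, j) \<in> L" "(u, l) \<in> L" and q: "1 / 2 \<le> q" "q \<le> 1"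
    and \<tau>: "0 < \<tau>" and l: "1 \<le> l" and \<theta>: "(\<integral>y. y \<partial>\<mu>) \<in> bin \<tau> l"
    and far: "2 < \<bar>int j - int l\<bar>" and mt: "1 \<le> mt"
  shows "(\<integral>r. noisy_vote \<tau> mt u j i (fst r) (snd r) - noisy_vote \<tau> mt u l i (fst r) (snd r)
            \<partial>(PiM K (\<lambda>_. \<mu>) \<Otimes>\<^sub>M PiM L (\<lambda>_. measure_pmf (bernoulli_pmf q))))
         \<le> (2 * q - 1) * (4 * exp (- 2 * real mt * \<tau>\<^sup>2) - 1) * indicator {i. mt \<le> i} i"
proof (cases "mt \<le> i")
  case True
  then show ?thesis
    using integral_vote_gap_le[OF K \<tau> l \<theta> far True mt] q
    by (simp add: integral_noisy_vote_gap[OF K L] mult_left_mono)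
next
  case False
  then show ?thesis using q by (simp add: integral_noisy_vote_gap[OF K L] vote_def)
qed

lemma integral_noisy_vote_gap_le:
  assumes u: "u \<in> {1..n div 2}" and j: "j \<in> {1..J}" and l: "l \<in> {1..J}" and q: "1 / 2 \<le> q" "q \<le> 1"
    and \<tau>: "0 < \<tau>" and \<theta>: "(\<integral>y. y \<partial>\<mu>) \<in> bin \<tau> l" and far: "2 < \<bar>int j - int l\<bar>" and mt: "1 \<le> mt"
  shows "integral\<^sup>L (loc_space M \<mu> n J q) (noisy_vote_gap \<tau> mt j l u)
          \<le> (2 * q - 1) * (4 * exp (- 2 * real mt * \<tau>\<^sup>2) - 1) * measure_pmf.prob M {i. mt \<le> i}"
proof -
  let ?A = "PiM {1..n div 2} (\<lambda>_. measure_pmf M)"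
  let ?R = "PiM ({1..n div 2} \<times> UNIV) (\<lambda>_. \<mu>) \<Otimes>\<^sub>M PiM ({1..n div 2} \<times> {1..J}) (\<lambda>_. measure_pmf (bernoulli_pmf q))"
  define c where "c = (2 * q - 1) * (4 * exp (- 2 * real mt * \<tau>\<^sup>2) - 1)"
  define G where "G i = (\<integral>r. noisy_vote \<tau> mt u j i (fst r) (snd r) - noisy_vote \<tau> mt u l i (fst r) (snd r) \<partial>?R)"
    for i
  interpret A: prob_space ?A by (intro prob_space_PiM measure_pmf.prob_space_axioms)
  interpret R: prob_space ?R by (intro prob_space_pair prob_space_PiM measure_pmf.prob_space_axioms prob_space_axioms)
  interpret P: pair_prob_space ?A ?R ..
  have G_le: "G i \<le> c * indicator {i. mt \<le> i} i" for i
    unfolding G_def c_def using u j l l q \<tau> \<theta> far mt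
    by (intro integral_noisy_vote_gap_given_size_le) auto
  have integrable_gap: "integrable (?A \<Otimes>\<^sub>M ?R) (noisy_vote_gap \<tau> mt j l u)"
    using noisy_vote_gap_measurable[OF u j l, of \<tau> mt M q] noisy_vote_gap_bounds[of \<tau> mt j l u]
    by (intro P.P.integrable_const_bound[where B=1]) (auto simp: loc_space_def abs_le_iff intro!: AE_I2)
  have gap_eq: "noisy_vote_gap \<tau> mt j l u (a, r) =
      noisy_vote \<tau> mt u j (a u) (fst r) (snd r) - noisy_vote \<tau> mt u l (a u) (fst r) (snd r)" for a r
    by (simp add: noisy_vote_gap_def Vt_eq_noisy_vote)
  have integrable_G: "integrable ?A (\<lambda>a. G (a u))"
    using P.integrable_fst'[OF integrable_gap] by (simp add: G_def gap_eq)
  have "integral\<^sup>L (loc_space M \<mu> n J q) (noisy_vote_gap \<tau> mt j l u) = (\<integral>a. G (a u) \<partial>?A)"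
    using P.integral_fst'[OF integrable_gap] by (simp add: G_def gap_eq loc_space_def)
  also have "\<dots> \<le> (\<integral>a. c * indicator {i. mt \<le> i} (a u) \<partial>?A)"
  proof (rule integral_mono[OF integrable_G _ G_le])
    have "(\<lambda>a. c * indicator {i. mt \<le> i} (a u)) \<in> borel_measurable ?A"
      using measurable_component_singleton[OF u, of "\<lambda>_. measure_pmf M"] by measurable
    then show "integrable ?A (\<lambda>a. c * indicator {i. mt \<le> i} (a u))"
      by (intro A.integrable_const_bound[where B="\<bar>c\<bar>"]) (auto intro!: AE_I2 simp: indicator_def)
  qed
  also have "\<dots> = (\<integral>i. c * indicator {i. mt \<le> i} i \<partial>measure_pmf M)"
    by (rule integral_PiM_component[OF measure_pmf.prob_space_axioms u]) simp
  also have "\<dots> = c * measure_pmf.prob M {i. mt \<le> i}"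
    by simp
  finally show ?thesis by (simp add: c_def)
qed

lemma prob_score_ge_le:
  fixes M :: "nat pmf"
  assumes n: "0 < n" "even n" and j: "j \<in> {1..J}" and l: "l \<in> {1..J}" and q: "1 / 2 \<le> q" "q \<le> 1"
    and \<tau>: "0 < \<tau>" and \<theta>: "(\<integral>y. y \<partial>\<mu>) \<in> bin \<tau> l" and far: "2 < \<bar>int j - int l\<bar>" and mt: "1 \<le> mt"
    and e: "4 * exp (- 2 * real mt * \<tau>\<^sup>2) \<le> 1"
  defines "\<delta> \<equiv> (2 * q - 1) * (1 - 4 * exp (- 2 * real mt * \<tau>\<^sup>2)) * measure_pmf.prob M {i. mt \<le> i}"
  shows "measure (loc_space M \<mu> n J q)
           {\<omega> \<in> space (loc_space M \<mu> n J q). score \<tau> mt n \<omega> l \<le> score \<tau> mt n \<omega> j}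
         \<le> exp (- real n * \<delta>\<^sup>2 / 4)"
proof -
  interpret P: prob_space "loc_space M \<mu> n J q" by (rule prob_space_loc_space[OF prob_space_axioms])
  have "{\<omega> \<in> space (loc_space M \<mu> n J q). score \<tau> mt n \<omega> l \<le> score \<tau> mt n \<omega> j}
      = {\<omega> \<in> space (loc_space M \<mu> n J q). 0 \<le> (\<Sum>u = 1..n div 2. noisy_vote_gap \<tau> mt j l u \<omega>)}"
  proof -
    have "score \<tau> mt n \<omega> l \<le> score \<tau> mt n \<omega> j \<longleftrightarrow> 0 \<le> (\<Sum>u = 1..n div 2. noisy_vote_gap \<tau> mt j l u \<omega>)"
      for \<omega> using score_diff_eq_sum_noisy_vote_gap[of \<tau> mt n \<omega> j l] by linarith
    then show ?thesis by simp
  qed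
  also have "P.prob \<dots> \<le> exp (- real (card {1..n div 2}) * \<delta>\<^sup>2 / 2)"
  proof (rule P.prob_sum_nonneg_le)
    show "{1..n div 2} \<noteq> {}" using n by auto
    show "P.indep_vars (\<lambda>_. borel) (noisy_vote_gap \<tau> mt j l) {1..n div 2}"
      by (rule indep_vars_noisy_vote_gap[OF j l])
    show "noisy_vote_gap \<tau> mt j l u \<omega> \<in> {-1..1}" for u \<omega>
      by (rule noisy_vote_gap_bounds)
    show "P.expectation (noisy_vote_gap \<tau> mt j l u) \<le> - \<delta>" if "u \<in> {1..n div 2}" for u
      using integral_noisy_vote_gap_le[OF that j l q \<tau> \<theta> far mt] by (simp add: \<delta>_def algebra_simps)
    show "0 \<le> \<delta>" using q e by (simp add: \<delta>_def)
  qed simp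
  also have "real (card {1..n div 2}) = real n / 2"
    using n(2) by auto
  finally show ?thesis by simp
qed

lemma prob_far_score_ge_le:
  fixes M :: "nat pmf"
  assumes n: "0 < n" "even n" and \<alpha>: "0 < \<alpha>" "\<alpha> \<le> 22 / 35" and mt: "1 \<le> mt"
  defines "\<tau> \<equiv> loc_tau mt n \<alpha>"
  defines "J \<equiv> loc_J \<tau>"
  assumes j: "j \<in> {1..J}" and l: "l \<in> {1..J}" and \<theta>: "(\<integral>y. y \<partial>\<mu>) \<in> bin \<tau> l"
    and far: "2 < \<bar>int j - int l\<bar>"
  shows "measure (loc_space M \<mu> n J (rr_prob \<alpha>))
           {\<omega> \<in> space (loc_space M \<mu> n J (rr_prob \<alpha>)). score \<tau> mt n \<omega> l \<le> score \<tau> mt n \<omega> j}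
         \<le> exp (- (real n * \<alpha>\<^sup>2 * (measure_pmf.prob M {i. mt \<le> i})\<^sup>2 / 579))"
proof -
  let ?p = "measure_pmf.prob M {i. mt \<le> i}"
  have \<tau>: "0 < \<tau>" using loc_tau_pos[OF mt] by (simp add: \<tau>_def)
  have e: "exp (- 2 * real mt * \<tau>\<^sup>2) \<le> 1 / 4096" using exp_loc_tau_le[OF mt] by (simp add: \<tau>_def)
  have q: "1 / 2 \<le> rr_prob \<alpha>" "rr_prob \<alpha> \<le> 1" using rr_prob_bounds[OF \<alpha>(1)] by auto
  have "measure (loc_space M \<mu> n J (rr_prob \<alpha>))
          {\<omega> \<in> space (loc_space M \<mu> n J (rr_prob \<alpha>)). score \<tau> mt n \<omega> l \<le> score \<tau> mt n \<omega> j}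
        \<le> exp (- real n * ((2 * rr_prob \<alpha> - 1) * (1 - 4 * exp (- 2 * real mt * \<tau>\<^sup>2)) * ?p)\<^sup>2 / 4)"
    using e by (intro prob_score_ge_le[OF n j l q \<tau> \<theta> far mt]) simp
  also have "\<dots> \<le> exp (- (real n * \<alpha>\<^sup>2 * ?p\<^sup>2 / 579))"
    using localisation_exponent_le[OF rr_prob_bias_ge[OF \<alpha>] e \<alpha>(1), of ?p n] by simp
  finally show ?thesis .
qed

end

theorem lemmaS5:
  fixes n mt l :: nat and \<alpha> \<theta> :: real and M :: "nat pmf" and \<mu> :: "real measure"
    and jhat :: "loc_omega \<Rightarrow> nat"
  defines "\<tau> \<equiv> loc_tau mt n \<alpha>"
  defines "J \<equiv> loc_J \<tau>"
  defines "P \<equiv> loc_space M \<mu> n J (rr_prob \<alpha>)"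
  assumes n_pos: "n > 0" and n_even: "even n"
    and alpha: "0 < \<alpha>" "\<alpha> \<le> 22 / 35"
    and M_supp: "0 \<notin> set_pmf M"
    and mu_prob: "prob_space \<mu>" and mu_sets: "sets \<mu> = sets borel"
    and mu_supp: "measure \<mu> {-1..1} = 1"
    and theta: "\<theta> = (\<integral>x. x \<partial>\<mu>)"
    and mt_pos: "mt \<ge> 1"
    and l: "l \<in> {1..J}" "\<theta> \<in> bin \<tau> l"
    and jhat_meas: "jhat \<in> measurable P (count_space UNIV)"
    and jhat_max: "\<And>\<omega>. jhat \<omega> \<in> {1..J} \<and>
                     (\<forall>j \<in> {1..J}. score \<tau> mt n \<omega> j \<le> score \<tau> mt n \<omega> (jhat \<omega>))"
  shows "measure P {\<omega> \<in> space P. \<bar>int (jhat \<omega>) - int l\<bar> > 2}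
           \<le> (1 / \<tau>) * exp (- (real n * \<alpha>\<^sup>2 *
                 (measure_pmf.prob M {i. i \<ge> mt})\<^sup>2 / 579))"
proof -
  define S where "S = {j \<in> {1..J}. 2 < \<bar>int j - int l\<bar>}"
  have \<tau>: "0 < \<tau>" using loc_tau_pos[OF mt_pos] by (simp add: \<tau>_def)
  interpret bounded_sample_distribution \<mu>
    using mu_prob mu_sets mu_supp
    by (simp add: bounded_sample_distribution_def bounded_sample_distribution_axioms_def)
  interpret P: prob_space P unfolding P_def by (rule prob_space_loc_space[OF mu_prob])
  have "{\<omega> \<in> space P. \<bar>int (jhat \<omega>) - int l\<bar> > 2} = {\<omega> \<in> space P. jhat \<omega> \<in> S}"
    using jhat_max by (auto simp: S_def)
  also have "P.prob \<dots> \<le> real (card S) * exp (- (real n * \<alpha>\<^sup>2 * (measure_pmf.prob M {i. mt \<le> i})\<^sup>2 / 579))"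
  proof (rule P.prob_argmax_mem_le[where s="\<lambda>j \<omega>. score \<tau> mt n \<omega> j" and l=l])
    show "score \<tau> mt n \<omega> l \<le> score \<tau> mt n \<omega> (jhat \<omega>)" for \<omega>
      using jhat_max l(1) by blast
    show "{\<omega> \<in> space P. score \<tau> mt n \<omega> l \<le> score \<tau> mt n \<omega> j} \<in> P.events" if "j \<in> S" for j
      using that l(1) unfolding P_def S_def by (intro borel_measurable_le score_measurable) auto
    show "P.prob {\<omega> \<in> space P. score \<tau> mt n \<omega> l \<le> score \<tau> mt n \<omega> j}
        \<le> exp (- (real n * \<alpha>\<^sup>2 * (measure_pmf.prob M {i. mt \<le> i})\<^sup>2 / 579))" if "j \<in> S" for j
      using that l unfolding P_def S_def J_def \<tau>_def theta
      by (intro prob_far_score_ge_le[OF n_pos n_even alpha mt_pos]) auto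
  qed (simp add: S_def)
  also have "\<dots> \<le> (1 / \<tau>) * exp (- (real n * \<alpha>\<^sup>2 * (measure_pmf.prob M {i. mt \<le> i})\<^sup>2 / 579))"
    using card_far_bins_le[OF \<tau>] l(1) by (intro mult_right_mono) (auto simp: S_def J_def)
  finally show ?thesis by simp
qed

end
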